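(* Let $\rho$ be a monic PBPO rule in a category. Then ${\Rightarrow_\rho} = {\Rightarrow^{\rightarrowtail}_\rho}$ and ${\Rightarrow^{\mathrm{SM}}_\rho} = {\Rightarrow^{\mathrm{PBPO}^{+}}_\rho}$, where in the latter $\rho$ is regarded as a PBPO$^{+}$ rule by forgetting $t_R$, $r'$ and $R'$.
   Context: A PBPO rule consists of morphisms $l : K \to L$, $r : K \to R$, $t_L : L \to L'$, $t_K : K \to K'$, $t_R : R \to R'$, $l' : K' \to L'$, $r' : K' \to R'$ with $t_L \circ l = l' \circ t_K$ and $t_R \circ r = r' \circ t_K$; it is canonical if $(l,t_K)$ is a pullback of $(t_L,l')$ and $(r',t_R)$ a pushout of $(t_K,r)$, and monic if canonical with $t_L$ mono. A PBPO step $G_L \Rightarrow_\rho^{m,\alpha} G_R$: $m : L \to G_L$, $\alpha : G_L \to L'$ with $t_L = \alpha \circ m$; a pullback $G_L \xleftarrow{g_L} G_K \xrightarrow{u'} K'$ of $\alpha,l'$; the unique $u : K \to G_K$ with $g_L \circ u = m \circ l$ and $u' \circ u = t_K$; a pushout $G_K \xrightarrow{g_R} G_R \xleftarrow{w} R$ of $u,r$. ${\Rightarrow_\rho}$ relates $G_L,G_R$ if such a step exists for some $m,\alpha$; ${\Rightarrow^{\rightarrowtail}_\rho}$ requires $m$ monic; ${\Rightarrow^{\mathrm{SM}}_\rho}$ requires that $L \xleftarrow{1_L} L \xrightarrow{m} G_L$ is a pullback of $t_L$ and $\alpha$. A PBPO$^{+}$ rule consists of $l : K \to L$, $r : K \to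 R$, monos $t_L, t_K$ and $l' : K' \to L'$ with $(l,t_K)$ a pullback of $(t_L,l')$. A PBPO$^{+}$ step $G_L \Rightarrow^{\mathrm{PBPO}^{+}}_\rho G_R$ holds if there is $\alpha : G_L \to L'$ and $m : L \to G_L$ such that $L \xleftarrow{1_L} L \xrightarrow{m} G_L$ is a pullback of $t_L,\alpha$; a pullback $G_L \xleftarrow{g_L} G_K \xrightarrow{u'} K'$ of $\alpha,l'$; the unique $u : K \to G_K$ with $t_K = u' \circ u$; and a pushout $G_K \xrightarrow{g_R} G_R \xleftarrow{w} R$ of $u$ and $r$. *)

theory Defs
  imports Main
begin

record ('o, 'm) cat =
  Ob   :: "'o set"
  Ar   :: "'m set"
  Dom  :: "'m \<Rightarrow> 'o"
  Cod  :: "'m \<Rightarrow> 'o"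
  Idm  :: "'o \<Rightarrow> 'm"
  Comp :: "'m \<Rightarrow> 'm \<Rightarrow> 'm"   (* Comp C g f = g \<circ> f *)

definition hom :: "('o, 'm) cat \<Rightarrow> 'm \<Rightarrow> 'o \<Rightarrow> 'o \<Rightarrow> bool" where
  "hom C f X Y \<longleftrightarrow> f \<in> Ar C \<and> Dom C f = X \<and> Cod C f = Y"

definition category :: "('o, 'm) cat \<Rightarrow> bool" where
  "category C \<longleftrightarrow>
     (\<forall>f \<in> Ar C. Dom C f \<in> Ob C \<and> Cod C f \<in> Ob C) \<and>
     (\<forall>X \<in> Ob C. hom C (Idm C X) X X) \<and>
     (\<forall>f \<in> Ar C. \<forall>g \<in> Ar C. Cod C f = Dom C g \<longrightarrow> hom C (Comp C g f) (Dom C f) (Cod C g)) \<and>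
     (\<forall>f \<in> Ar C. Comp C f (Idm C (Dom C f)) = f \<and> Comp C (Idm C (Cod C f)) f = f) \<and>
     (\<forall>f \<in> Ar C. \<forall>g \<in> Ar C. \<forall>h \<in> Ar C. Cod C f = Dom C g \<longrightarrow> Cod C g = Dom C h \<longrightarrow>
        Comp C h (Comp C g f) = Comp C (Comp C h g) f)"

definition mono :: "('o, 'm) cat \<Rightarrow> 'm \<Rightarrow> bool" where
  "mono C f \<longleftrightarrow> f \<in> Ar C \<and>
     (\<forall>g \<in> Ar C. \<forall>h \<in> Ar C. Cod C g = Dom C f \<longrightarrow> Cod C h = Dom C f \<longrightarrow> Dom C g = Dom C h \<longrightarrow>
        Comp C f g = Comp C f h \<longrightarrow> g = h)"

definition is_pullback :: "('o, 'm) cat \<Rightarrow> 'o \<Rightarrow> 'm \<Rightarrow> 'm \<Rightarrow> 'm \<Rightarrow> 'm \<Rightarrow> bool" where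
  "is_pullback C P p1 p2 f g \<longleftrightarrow>
     f \<in> Ar C \<and> g \<in> Ar C \<and> Cod C f = Cod C g \<and>
     hom C p1 P (Dom C f) \<and> hom C p2 P (Dom C g) \<and>
     Comp C f p1 = Comp C g p2 \<and>
     (\<forall>Q q1 q2. hom C q1 Q (Dom C f) \<longrightarrow> hom C q2 Q (Dom C g) \<longrightarrow> Comp C f q1 = Comp C g q2 \<longrightarrow>
        (\<exists>!u. hom C u Q P \<and> Comp C p1 u = q1 \<and> Comp C p2 u = q2))"

definition is_pushout :: "('o, 'm) cat \<Rightarrow> 'o \<Rightarrow> 'm \<Rightarrow> 'm \<Rightarrow> 'm \<Rightarrow> 'm \<Rightarrow> bool" where
  "is_pushout C Q q1 q2 f g \<longleftrightarrow>
     f \<in> Ar C \<and> g \<in> Ar C \<and> Dom C f = Dom C g \<and>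
     hom C q1 (Cod C f) Q \<and> hom C q2 (Cod C g) Q \<and>
     Comp C q1 f = Comp C q2 g \<and>
     (\<forall>P s1 s2. hom C s1 (Cod C f) P \<longrightarrow> hom C s2 (Cod C g) P \<longrightarrow> Comp C s1 f = Comp C s2 g \<longrightarrow>
        (\<exists>!u. hom C u Q P \<and> Comp C u q1 = s1 \<and> Comp C u q2 = s2))"

record ('o, 'm) pbpo_rule =
  oL :: 'o  oK :: 'o  oR :: 'o  oL' :: 'o  oK' :: 'o  oR' :: 'o
  rl :: 'm  rr :: 'm  tL :: 'm  tK :: 'm  tR :: 'm  rl' :: 'm  rr' :: 'm

definition pbpo_rule :: "('o, 'm) cat \<Rightarrow> ('o, 'm) pbpo_rule \<Rightarrow> bool" where
  "pbpo_rule C \<rho> \<longleftrightarrow>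
     hom C (rl \<rho>) (oK \<rho>) (oL \<rho>) \<and> hom C (rr \<rho>) (oK \<rho>) (oR \<rho>) \<and>
     hom C (tL \<rho>) (oL \<rho>) (oL' \<rho>) \<and> hom C (tK \<rho>) (oK \<rho>) (oK' \<rho>) \<and>
     hom C (tR \<rho>) (oR \<rho>) (oR' \<rho>) \<and>
     hom C (rl' \<rho>) (oK' \<rho>) (oL' \<rho>) \<and> hom C (rr' \<rho>) (oK' \<rho>) (oR' \<rho>) \<and>
     Comp C (tL \<rho>) (rl \<rho>) = Comp C (rl' \<rho>) (tK \<rho>) \<and>
     Comp C (tR \<rho>) (rr \<rho>) = Comp C (rr' \<rho>) (tK \<rho>)"

definition canonical_pbpo_rule :: "('o, 'm) cat \<Rightarrow> ('o, 'm) pbpo_rule \<Rightarrow> bool" where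
  "canonical_pbpo_rule C \<rho> \<longleftrightarrow> pbpo_rule C \<rho> \<and>
     is_pullback C (oK \<rho>) (rl \<rho>) (tK \<rho>) (tL \<rho>) (rl' \<rho>) \<and>
     is_pushout C (oR' \<rho>) (rr' \<rho>) (tR \<rho>) (tK \<rho>) (rr \<rho>)"

definition monic_pbpo_rule :: "('o, 'm) cat \<Rightarrow> ('o, 'm) pbpo_rule \<Rightarrow> bool" where
  "monic_pbpo_rule C \<rho> \<longleftrightarrow> canonical_pbpo_rule C \<rho> \<and> mono C (tL \<rho>)"

definition pbpo_step ::
  "('o, 'm) cat \<Rightarrow> ('o, 'm) pbpo_rule \<Rightarrow> 'm \<Rightarrow> 'm \<Rightarrow> 'o \<Rightarrow> 'o \<Rightarrow> bool" where
  "pbpo_step C \<rho> m \<alpha> GL GR \<longleftrightarrow>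
     hom C m (oL \<rho>) GL \<and> hom C \<alpha> GL (oL' \<rho>) \<and> tL \<rho> = Comp C \<alpha> m \<and>
     (\<exists>GK gL u' u gR w.
        is_pullback C GK gL u' \<alpha> (rl' \<rho>) \<and>
        hom C u (oK \<rho>) GK \<and> Comp C gL u = Comp C m (rl \<rho>) \<and> Comp C u' u = tK \<rho> \<and>
        (\<forall>v. hom C v (oK \<rho>) GK \<and> Comp C gL v = Comp C m (rl \<rho>) \<and> Comp C u' v = tK \<rho> \<longrightarrow> v = u) \<and>
        is_pushout C GR gR w u (rr \<rho>))"

definition pbpo_rel :: "('o, 'm) cat \<Rightarrow> ('o, 'm) pbpo_rule \<Rightarrow> 'o \<Rightarrow> 'o \<Rightarrow> bool" where
  "pbpo_rel C \<rho> GL GR \<longleftrightarrow> (\<exists>m \<alpha>. pbpo_step C \<rho> m \<alpha> GL GR)"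

definition pbpo_mono_rel :: "('o, 'm) cat \<Rightarrow> ('o, 'm) pbpo_rule \<Rightarrow> 'o \<Rightarrow> 'o \<Rightarrow> bool" where
  "pbpo_mono_rel C \<rho> GL GR \<longleftrightarrow> (\<exists>m \<alpha>. pbpo_step C \<rho> m \<alpha> GL GR \<and> mono C m)"

definition pbpo_sm_rel :: "('o, 'm) cat \<Rightarrow> ('o, 'm) pbpo_rule \<Rightarrow> 'o \<Rightarrow> 'o \<Rightarrow> bool" where
  "pbpo_sm_rel C \<rho> GL GR \<longleftrightarrow> (\<exists>m \<alpha>. pbpo_step C \<rho> m \<alpha> GL GR \<and>
     is_pullback C (oL \<rho>) (Idm C (oL \<rho>)) m (tL \<rho>) \<alpha>)"

text \<open>PBPO-plus step, using only the components \<open>L, K, R, L', K', l, r, t_L, t_K, l'\<close> of the rule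
  (i.e. the rule regarded as a PBPO-plus rule by forgetting \<open>t_R, r', R'\<close>).\<close>
definition pbpo_plus_rel :: "('o, 'm) cat \<Rightarrow> ('o, 'm) pbpo_rule \<Rightarrow> 'o \<Rightarrow> 'o \<Rightarrow> bool" where
  "pbpo_plus_rel C \<rho> GL GR \<longleftrightarrow>
     (\<exists>m \<alpha>. hom C m (oL \<rho>) GL \<and> hom C \<alpha> GL (oL' \<rho>) \<and>
        is_pullback C (oL \<rho>) (Idm C (oL \<rho>)) m (tL \<rho>) \<alpha> \<and>
        (\<exists>GK gL u' u gR w.
           is_pullback C GK gL u' \<alpha> (rl' \<rho>) \<and>
           hom C u (oK \<rho>) GK \<and> Comp C u' u = tK \<rho> \<and>
           (\<forall>v. hom C v (oK \<rho>) GK \<and> Comp C u' v = tK \<rho> \<longrightarrow> v = u) \<and>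
           is_pushout C GR gR w u (rr \<rho>)))"

end

theory Submission
  imports Defs
begin

text \<open>Both equalities come from the factorisation \<open>t\<^sub>L = \<alpha> \<circ> m\<close> of every step. If \<open>t\<^sub>L\<close> is
  mono, so is its right factor \<open>m\<close>, hence every PBPO match is already monic. If moreover the
  square \<open>1\<^sub>L, m, t\<^sub>L, \<alpha>\<close> is a pullback, then any \<open>v : K \<rightarrow> G\<^sub>K\<close> with \<open>u' \<circ> v = t\<^sub>K\<close> satisfies
  \<open>\<alpha> \<circ> g\<^sub>L \<circ> v = l' \<circ> t\<^sub>K = t\<^sub>L \<circ> l\<close>, so \<open>g\<^sub>L \<circ> v\<close> factors through the pullback as \<open>m \<circ> l\<close>.
  Hence the condition \<open>g\<^sub>L \<circ> u = m \<circ> l\<close>, which PBPO imposes on \<open>u\<close> and PBPO-plus omits, holds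
  automatically, and the two notions of step coincide.\<close>

lemma comp_hom:
  "category C \<Longrightarrow> hom C f X Y \<Longrightarrow> hom C g Y Z \<Longrightarrow> hom C (Comp C g f) X Z"
  unfolding category_def hom_def by metis

lemma comp_assoc:
  "category C \<Longrightarrow> hom C f X Y \<Longrightarrow> hom C g Y Z \<Longrightarrow> hom C h Z W \<Longrightarrow>
   Comp C h (Comp C g f) = Comp C (Comp C h g) f"
  unfolding category_def hom_def by metis

lemma comp_Idm_left: "category C \<Longrightarrow> hom C f X Y \<Longrightarrow> Comp C (Idm C Y) f = f"
  unfolding category_def hom_def by metis

lemma comp_Idm_right: "category C \<Longrightarrow> hom C f X Y \<Longrightarrow> Comp C f (Idm C X) = f"
  unfolding category_def hom_def by metis

lemma hom_Idm_cod: "category C \<Longrightarrow> hom C (Idm C A) A Y \<Longrightarrow> Y = A"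
  unfolding category_def hom_def by metis

lemma mono_right_factor:
  assumes C: "category C" and f: "hom C f X Y" and g: "hom C g Y Z"
    and gf: "mono C (Comp C g f)"
  shows "mono C f"
  unfolding mono_def
proof (intro conjI ballI impI)
  show "f \<in> Ar C" using f unfolding hom_def by simp
  fix h k assume h: "h \<in> Ar C" and k: "k \<in> Ar C" and "Cod C h = Dom C f" "Cod C k = Dom C f"
    and dom_eq: "Dom C h = Dom C k" and eq: "Comp C f h = Comp C f k"
  then have h': "hom C h (Dom C h) X" and k': "hom C k (Dom C h) X"
    using f unfolding hom_def by auto
  have "Comp C (Comp C g f) h = Comp C (Comp C g f) k"
    using comp_assoc[OF C h' f g] comp_assoc[OF C k' f g] eq by simp
  moreover have "Dom C (Comp C g f) = X" using comp_hom[OF C f g] unfolding hom_def by simp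
  moreover have "Cod C h = X" "Cod C k = X" using h' k' unfolding hom_def by simp_all
  ultimately show "h = k" using gf h k dom_eq unfolding mono_def by simp
qed

lemma pullback_commutes: "is_pullback C P p1 p2 f g \<Longrightarrow> Comp C f p1 = Comp C g p2"
  unfolding is_pullback_def by simp

lemma pullback_Idm_factor:
  assumes C: "category C" and pb: "is_pullback C A (Idm C A) m f g"
    and g: "hom C g Y Z" and y: "hom C y X A" and x: "hom C x X Y" and eq: "Comp C f y = Comp C g x"
  shows "x = Comp C m y"
proof -
  have "Dom C f = A" using pb hom_Idm_cod[OF C] unfolding is_pullback_def by blast
  then obtain w where w: "hom C w X A" "Comp C (Idm C A) w = y" "Comp C m w = x"
    using pb g y x eq unfolding is_pullback_def hom_def by metis
  then show ?thesis using comp_Idm_left[OF C w(1)] by simp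
qed

lemma pullback_Idm_comp:
  assumes C: "category C" and pb: "is_pullback C A (Idm C A) m f g"
  shows "f = Comp C g m"
proof -
  have "hom C f A (Cod C f)" using pb hom_Idm_cod[OF C] unfolding is_pullback_def hom_def by blast
  then show ?thesis using comp_Idm_right[OF C] pullback_commutes[OF pb] by metis
qed

lemma pbpo_step_match_mono:
  assumes C: "category C" and tL: "mono C (tL \<rho>)" and step: "pbpo_step C \<rho> m \<alpha> GL GR"
  shows "mono C m"
proof -
  have m: "hom C m (oL \<rho>) GL" and \<alpha>: "hom C \<alpha> GL (oL' \<rho>)" and "tL \<rho> = Comp C \<alpha> m"
    using step unfolding pbpo_step_def by auto
  then show ?thesis using mono_right_factor[OF C m \<alpha>] tL by simp
qed

theorem pbpo_rel_eq_pbpo_mono_rel: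
  assumes "category C" and "mono C (tL \<rho>)"
  shows "pbpo_rel C \<rho> = pbpo_mono_rel C \<rho>"
  unfolding pbpo_rel_def pbpo_mono_rel_def fun_eq_iff
  using pbpo_step_match_mono[OF assms] by blast

lemma strong_match_square_commutes:
  assumes C: "category C" and \<rho>: "pbpo_rule C \<rho>"
    and pb: "is_pullback C (oL \<rho>) (Idm C (oL \<rho>)) m (tL \<rho>) \<alpha>"
    and \<alpha>: "hom C \<alpha> GL (oL' \<rho>)" and pbK: "is_pullback C GK gL u' \<alpha> (rl' \<rho>)"
    and v: "hom C v (oK \<rho>) GK" and u'v: "Comp C u' v = tK \<rho>"
  shows "Comp C gL v = Comp C m (rl \<rho>)"
proof -
  have gL: "hom C gL GK GL" and u': "hom C u' GK (oK' \<rho>)"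
    using pbK \<alpha> \<rho> unfolding is_pullback_def pbpo_rule_def hom_def by auto
  have l: "hom C (rl \<rho>) (oK \<rho>) (oL \<rho>)" and l': "hom C (rl' \<rho>) (oK' \<rho>) (oL' \<rho>)"
    using \<rho> unfolding pbpo_rule_def by auto
  have "Comp C \<alpha> (Comp C gL v) = Comp C (Comp C \<alpha> gL) v" using comp_assoc[OF C v gL \<alpha>] .
  also have "\<dots> = Comp C (Comp C (rl' \<rho>) u') v" using pullback_commutes[OF pbK] by simp
  also have "\<dots> = Comp C (rl' \<rho>) (tK \<rho>)" using comp_assoc[OF C v u' l'] u'v by simp
  also have "\<dots> = Comp C (tL \<rho>) (rl \<rho>)" using \<rho> unfolding pbpo_rule_def by simp
  finally show ?thesis
    using pullback_Idm_factor[OF C pb \<alpha> l comp_hom[OF C v gL]] by simp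
qed

lemma pbpo_strong_step_iff_pbpo_plus_step:
  assumes C: "category C" and \<rho>: "pbpo_rule C \<rho>"
  shows "pbpo_step C \<rho> m \<alpha> GL GR \<and> is_pullback C (oL \<rho>) (Idm C (oL \<rho>)) m (tL \<rho>) \<alpha> \<longleftrightarrow>
    hom C m (oL \<rho>) GL \<and> hom C \<alpha> GL (oL' \<rho>) \<and>
    is_pullback C (oL \<rho>) (Idm C (oL \<rho>)) m (tL \<rho>) \<alpha> \<and>
    (\<exists>GK gL u' u gR w.
       is_pullback C GK gL u' \<alpha> (rl' \<rho>) \<and>
       hom C u (oK \<rho>) GK \<and> Comp C u' u = tK \<rho> \<and>
       (\<forall>v. hom C v (oK \<rho>) GK \<and> Comp C u' v = tK \<rho> \<longrightarrow> v = u) \<and>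
       is_pushout C GR gR w u (rr \<rho>))"
proof (cases "hom C \<alpha> GL (oL' \<rho>) \<and> is_pullback C (oL \<rho>) (Idm C (oL \<rho>)) m (tL \<rho>) \<alpha>")
  case True
  then have \<alpha>: "hom C \<alpha> GL (oL' \<rho>)" and pb: "is_pullback C (oL \<rho>) (Idm C (oL \<rho>)) m (tL \<rho>) \<alpha>"
    by simp_all
  have "tL \<rho> = Comp C \<alpha> m" using pullback_Idm_comp[OF C pb] .
  then show ?thesis
    unfolding pbpo_step_def using \<alpha> pb strong_match_square_commutes[OF C \<rho> pb \<alpha>] by blast
next
  case False
  then show ?thesis unfolding pbpo_step_def by blast
qed

theorem pbpo_sm_rel_eq_pbpo_plus_rel:
  assumes "category C" and "pbpo_rule C \<rho>"
  shows "pbpo_sm_rel C \<rho> = pbpo_plus_rel C \<rho>"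
  unfolding pbpo_sm_rel_def pbpo_plus_rel_def
  by (simp only: pbpo_strong_step_iff_pbpo_plus_step[OF assms])

theorem proposition1:
  fixes C :: "('o, 'm) cat" and \<rho> :: "('o, 'm) pbpo_rule"
  assumes "category C" and "monic_pbpo_rule C \<rho>"
  shows "pbpo_rel C \<rho> = pbpo_mono_rel C \<rho> \<and> pbpo_sm_rel C \<rho> = pbpo_plus_rel C \<rho>"
proof -
  have "pbpo_rule C \<rho>" and "mono C (tL \<rho>)"
    using assms(2) unfolding monic_pbpo_rule_def canonical_pbpo_rule_def by auto
  then show ?thesis
    using pbpo_rel_eq_pbpo_mono_rel pbpo_sm_rel_eq_pbpo_plus_rel assms(1) by blast
qed

end
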